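(* The following five $8$-dimensional complex Lie algebras are mutually non-isomorphic. Each has basis $\mathbf x_1,\dots,\mathbf x_6,\mathbf y_1,\mathbf y_2$, with the listed nonzero brackets (together with those obtained by antisymmetry) and all other brackets of basis elements equal to zero: (1) $N^{8,2}_1$: $[\mathbf x_1,\mathbf x_2]=\mathbf y_1$, $[\mathbf x_3,\mathbf x_4]=\mathbf y_2$, $[\mathbf x_5,\mathbf x_6]=\mathbf y_1+\mathbf y_2$; (2) $N^{8,2}_2$: $[\mathbf x_5,\mathbf x_2]=[\mathbf x_6,\mathbf x_1]=\mathbf y_1$, $[\mathbf x_5,\mathbf x_3]=[\mathbf x_6,\mathbf x_4]=\mathbf y_2$; (3) $N^{8,2}_3$: $[\mathbf x_1,\mathbf x_2]=[\mathbf x_6,\mathbf x_5]=\mathbf y_1$, $[\mathbf x_3,\mathbf x_6]=[\mathbf x_5,\mathbf x_4]=\mathbf y_2$; (4) $N^{8,2}_4$: $[\mathbf x_1,\mathbf x_2]=[\mathbf x_3,\mathbf x_6]=[\mathbf x_5,\mathbf x_4]=\mathbf y_1$, $[\mathbf x_6,\mathbf x_5]=\mathbf y_2$; (5) $N^{8,2}_5$: $[\mathbf x_1,\mathbf x_6]=[\mathbf x_3,\mathbf x_4]=[\mathbf x_5,\mathbf x_2]=\mathbf y_1$, $[\mathbf x_6,\mathbf x_3]=[\mathbf x_4,\mathbf x_5]=\mathbf y_2$. *)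

theory Defs
  imports "HOL-Analysis.Analysis"
begin

datatype basis = X1 | X2 | X3 | X4 | X5 | X6 | Y1 | Y2

lemma UNIV_basis: "(UNIV :: basis set) = {X1, X2, X3, X4, X5, X6, Y1, Y2}"
  by (auto intro: basis.exhaust)

instance basis :: finite
  by standard (simp add: UNIV_basis)

type_synonym vec8 = "complex ^ basis"

definition e :: "basis \<Rightarrow> vec8" where
  "e b = axis b 1"

text \<open>A multiplication table: list of listed brackets [p,q] = w; the bracket of basis
  elements is extended by antisymmetry, all others zero.\<close>
type_synonym table = "((basis \<times> basis) \<times> vec8) list"

definition br :: "table \<Rightarrow> basis \<Rightarrow> basis \<Rightarrow> vec8" where
  "br L a b = sum_list (map (\<lambda>((p,q),w). if (a,b) = (p,q) then w
                                         else if (a,b) = (q,p) then - w else 0) L)"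

definition bracket :: "table \<Rightarrow> vec8 \<Rightarrow> vec8 \<Rightarrow> vec8" where
  "bracket L u v = (\<chi> k. \<Sum>i\<in>UNIV. \<Sum>j\<in>UNIV. u$i * v$j * (br L i j)$k)"

definition lie_iso :: "table \<Rightarrow> table \<Rightarrow> bool" where
  "lie_iso L1 L2 \<longleftrightarrow> (\<exists>A :: complex ^ basis ^ basis. invertible A \<and>
      (\<forall>u v. A *v bracket L1 u v = bracket L2 (A *v u) (A *v v)))"

definition N1 :: table where
  "N1 = [((X1,X2), e Y1), ((X3,X4), e Y2), ((X5,X6), e Y1 + e Y2)]"

definition N2 :: table where
  "N2 = [((X5,X2), e Y1), ((X6,X1), e Y1), ((X5,X3), e Y2), ((X6,X4), e Y2)]"

definition N3 :: table where
  "N3 = [((X1,X2), e Y1), ((X6,X5), e Y1), ((X3,X6), e Y2), ((X5,X4), e Y2)]"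

definition N4 :: table where
  "N4 = [((X1,X2), e Y1), ((X3,X6), e Y1), ((X5,X4), e Y1), ((X6,X5), e Y2)]"

definition N5 :: table where
  "N5 = [((X1,X6), e Y1), ((X3,X4), e Y1), ((X5,X2), e Y1), ((X6,X3), e Y2), ((X4,X5), e Y2)]"

definition N :: "nat \<Rightarrow> table" where
  "N i = (if i = 1 then N1 else if i = 2 then N2 else if i = 3 then N3
          else if i = 4 then N4 else N5)"

end

theory Submission
  imports Defs
begin

(* An isomorphism maps the elements u whose adjoint map ad u has rank at most one onto the
   corresponding elements of the other algebra, and therefore also maps the brackets [u, v]
   with such u onto each other.  Hence three properties are isomorphism invariants: some two
   such elements do not commute; some two such brackets are linearly independent; some three
   such brackets are pairwise independent.  For N1, ..., N5 these take the values
   (yes, yes, yes), (no, yes, yes), (yes, yes, no), (yes, no, no), (no, no, no).  The negative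
   values come from the vanishing of the 2x2 minors of ad u, which confines the elements of
   rank at most one to a small subspace. *)

definition independent_pair :: "'a::field ^ 'n \<Rightarrow> 'a ^ 'n \<Rightarrow> bool" where
  "independent_pair z1 z2 \<longleftrightarrow> (\<forall>a b. a *s z1 + b *s z2 = 0 \<longrightarrow> a = 0 \<and> b = 0)"

lemma independent_pair_if_minor_nonzero:
  fixes z1 z2 :: "'a::field ^ 'n"
  assumes minor: "z1$i * z2$j \<noteq> z1$j * z2$i"
  shows "independent_pair z1 z2"
  unfolding independent_pair_def
proof (intro allI impI)
  fix a b assume "a *s z1 + b *s z2 = 0"
  then have eq_i: "a * z1$i + b * z2$i = 0" and eq_j: "a * z1$j + b * z2$j = 0"
    by (metis vector_add_component vector_smult_component zero_index)+
  define d where "d = z1$i * z2$j - z1$j * z2$i"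
  have "a * d = (a * z1$i + b * z2$i) * z2$j - (a * z1$j + b * z2$j) * z2$i"
   and "b * d = (a * z1$j + b * z2$j) * z1$i - (a * z1$i + b * z2$i) * z1$j"
    unfolding d_def by (simp_all add: algebra_simps)
  then have "a * d = 0" and "b * d = 0" by (simp_all add: eq_i eq_j)
  moreover have "d \<noteq> 0" using minor unfolding d_def by simp
  ultimately show "a = 0 \<and> b = 0" by simp
qed

lemma not_independent_pair_collinear: "\<not> independent_pair (c1 *s w) (c2 *s w)"
proof (cases "c1 = 0")
  case True
  have "1 *s (c1 *s w) + 0 *s (c2 *s w) = 0" by (simp add: True)
  then show ?thesis unfolding independent_pair_def by (meson one_neq_zero)
next
  case False
  have "c2 *s (c1 *s w) + (- c1) *s (c2 *s w) = 0" by (simp add: vec_eq_iff algebra_simps)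
  with False show ?thesis unfolding independent_pair_def by (meson neg_equal_0_iff_equal)
qed

lemma independent_pair_matrix_vector_mult:
  fixes A :: "'a::field ^ 'n ^ 'm"
  assumes "inj ((*v) A)" and "independent_pair z1 z2"
  shows "independent_pair (A *v z1) (A *v z2)"
  unfolding independent_pair_def
proof (intro allI impI)
  fix a b assume "a *s (A *v z1) + b *s (A *v z2) = 0"
  then have "A *v (a *s z1 + b *s z2) = A *v 0"
    by (simp add: matrix_vector_right_distrib vector_scalar_commute)
  then have "a *s z1 + b *s z2 = 0" by (rule injD[OF assms(1)])
  with assms(2) show "a = 0 \<and> b = 0" unfolding independent_pair_def by blast
qed

definition is_lie_iso :: "complex ^ basis ^ basis \<Rightarrow> table \<Rightarrow> table \<Rightarrow> bool" where
  "is_lie_iso A L1 L2 \<longleftrightarrow>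
     invertible A \<and> (\<forall>u v. A *v bracket L1 u v = bracket L2 (A *v u) (A *v v))"

lemma lie_iso_iff_is_lie_iso: "lie_iso L1 L2 \<longleftrightarrow> (\<exists>A. is_lie_iso A L1 L2)"
  unfolding lie_iso_def is_lie_iso_def ..

lemma is_lie_iso_inverse:
  assumes iso: "is_lie_iso A L1 L2" and AB: "A ** B = mat 1" and BA: "B ** A = mat 1"
  shows "is_lie_iso B L2 L1"
  unfolding is_lie_iso_def
proof (intro conjI allI)
  show "invertible B" using AB BA unfolding invertible_def by blast
  fix u v
  have A_B: "A *v (B *v x) = x" for x by (simp add: matrix_vector_mul_assoc AB)
  have "B *v bracket L2 u v = B *v bracket L2 (A *v (B *v u)) (A *v (B *v v))" by (simp add: A_B)
  also have "\<dots> = B *v (A *v bracket L1 (B *v u) (B *v v))"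
    using iso unfolding is_lie_iso_def by simp
  also have "\<dots> = bracket L1 (B *v u) (B *v v)" by (simp add: matrix_vector_mul_assoc BA)
  finally show "B *v bracket L2 u v = bracket L1 (B *v u) (B *v v)" .
qed

lemma lie_iso_sym: "lie_iso L1 L2 \<Longrightarrow> lie_iso L2 L1"
  unfolding lie_iso_iff_is_lie_iso
  by (metis is_lie_iso_def invertible_def is_lie_iso_inverse)

definition ad_rank_le_one :: "table \<Rightarrow> vec8 \<Rightarrow> bool" where
  "ad_rank_le_one L u \<longleftrightarrow> (\<exists>w. \<forall>v. \<exists>c. bracket L u v = c *s w)"

definition rank_le_one_brackets :: "table \<Rightarrow> vec8 set" where
  "rank_le_one_brackets L = {bracket L u v | u v. ad_rank_le_one L u}"

definition rank_le_one_noncommuting :: "table \<Rightarrow> bool" where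
  "rank_le_one_noncommuting L \<longleftrightarrow>
     (\<exists>u v. ad_rank_le_one L u \<and> ad_rank_le_one L v \<and> bracket L u v \<noteq> 0)"

definition two_independent_rank_le_one_brackets :: "table \<Rightarrow> bool" where
  "two_independent_rank_le_one_brackets L \<longleftrightarrow>
     (\<exists>z1\<in>rank_le_one_brackets L. \<exists>z2\<in>rank_le_one_brackets L. independent_pair z1 z2)"

definition three_independent_rank_le_one_brackets :: "table \<Rightarrow> bool" where
  "three_independent_rank_le_one_brackets L \<longleftrightarrow>
     (\<exists>z1\<in>rank_le_one_brackets L. \<exists>z2\<in>rank_le_one_brackets L. \<exists>z3\<in>rank_le_one_brackets L.
        independent_pair z1 z2 \<and> independent_pair z1 z3 \<and> independent_pair z2 z3)"

definition rank_le_one_signature :: "table \<Rightarrow> bool \<times> bool \<times> bool" where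
  "rank_le_one_signature L =
     (rank_le_one_noncommuting L, two_independent_rank_le_one_brackets L,
      three_independent_rank_le_one_brackets L)"

lemma ad_rank_le_one_intro: "(\<And>v. bracket L u v = c v *s w) \<Longrightarrow> ad_rank_le_one L u"
  unfolding ad_rank_le_one_def by blast

lemma ad_rank_le_one_minor:
  assumes "ad_rank_le_one L u"
  shows "bracket L u v $ i * bracket L u v' $ j = bracket L u v $ j * bracket L u v' $ i"
proof -
  obtain w where "\<forall>v. \<exists>c. bracket L u v = c *s w" using assms unfolding ad_rank_le_one_def by blast
  then obtain c c' where "bracket L u v = c *s w" "bracket L u v' = c' *s w" by blast
  then show ?thesis by (simp add: mult_ac)
qed

lemma rank_le_one_bracketsI: "ad_rank_le_one L u \<Longrightarrow> bracket L u v \<in> rank_le_one_brackets L"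
  unfolding rank_le_one_brackets_def by blast

lemma three_independent_imp_two:
  "three_independent_rank_le_one_brackets L \<Longrightarrow> two_independent_rank_le_one_brackets L"
  unfolding three_independent_rank_le_one_brackets_def two_independent_rank_le_one_brackets_def
  by blast

lemma two_independent_rank_le_one_bracketsI:
  assumes "ad_rank_le_one L u1" "ad_rank_le_one L u2"
    and "independent_pair (bracket L u1 v1) (bracket L u2 v2)"
  shows "two_independent_rank_le_one_brackets L"
  unfolding two_independent_rank_le_one_brackets_def using assms rank_le_one_bracketsI by blast

lemma three_independent_rank_le_one_bracketsI:
  assumes "ad_rank_le_one L u1" "ad_rank_le_one L u2" "ad_rank_le_one L u3"
    and "independent_pair (bracket L u1 v1) (bracket L u2 v2)"
      "independent_pair (bracket L u1 v1) (bracket L u3 v3)"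
      "independent_pair (bracket L u2 v2) (bracket L u3 v3)"
  shows "three_independent_rank_le_one_brackets L"
  unfolding three_independent_rank_le_one_brackets_def using assms rank_le_one_bracketsI by blast

lemma is_lie_iso_ad_rank_le_one:
  assumes iso: "is_lie_iso A L1 L2" and "ad_rank_le_one L1 u"
  shows "ad_rank_le_one L2 (A *v u)"
proof -
  obtain w where w: "\<forall>v. \<exists>c. bracket L1 u v = c *s w"
    using assms(2) unfolding ad_rank_le_one_def by blast
  obtain B where AB: "A ** B = mat 1" using iso unfolding is_lie_iso_def invertible_def by blast
  have "\<exists>c. bracket L2 (A *v u) v = c *s (A *v w)" for v
  proof -
    obtain c where c: "bracket L1 u (B *v v) = c *s w" using w by blast
    have "bracket L2 (A *v u) v = bracket L2 (A *v u) (A *v (B *v v))"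
      by (simp add: matrix_vector_mul_assoc AB)
    also have "\<dots> = A *v bracket L1 u (B *v v)" using iso unfolding is_lie_iso_def by simp
    also have "\<dots> = c *s (A *v w)" by (simp add: c vector_scalar_commute)
    finally show ?thesis by blast
  qed
  then show ?thesis unfolding ad_rank_le_one_def by blast
qed

lemma is_lie_iso_rank_le_one_brackets:
  assumes iso: "is_lie_iso A L1 L2" and "z \<in> rank_le_one_brackets L1"
  shows "A *v z \<in> rank_le_one_brackets L2"
proof -
  obtain u v where u: "ad_rank_le_one L1 u" and z: "z = bracket L1 u v"
    using assms(2) unfolding rank_le_one_brackets_def by blast
  from iso u have "ad_rank_le_one L2 (A *v u)" by (rule is_lie_iso_ad_rank_le_one)
  moreover have "A *v z = bracket L2 (A *v u) (A *v v)"
    using iso unfolding is_lie_iso_def z by simp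
  ultimately show ?thesis by (simp add: rank_le_one_bracketsI)
qed

lemma is_lie_iso_rank_le_one_properties:
  assumes iso: "is_lie_iso A L1 L2"
  shows "rank_le_one_noncommuting L1 \<Longrightarrow> rank_le_one_noncommuting L2"
    and "two_independent_rank_le_one_brackets L1 \<Longrightarrow> two_independent_rank_le_one_brackets L2"
    and "three_independent_rank_le_one_brackets L1 \<Longrightarrow> three_independent_rank_le_one_brackets L2"
proof -
  have inj: "inj ((*v) A)" using iso unfolding is_lie_iso_def by (simp add: inj_matrix_vector_mult)
  have hom: "A *v bracket L1 u v = bracket L2 (A *v u) (A *v v)" for u v
    using iso unfolding is_lie_iso_def by blast
  note rank = is_lie_iso_ad_rank_le_one[OF iso] and brackets = is_lie_iso_rank_le_one_brackets[OF iso]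
    and indep = independent_pair_matrix_vector_mult[OF inj]
  show "rank_le_one_noncommuting L1 \<Longrightarrow> rank_le_one_noncommuting L2"
    unfolding rank_le_one_noncommuting_def
  proof (elim exE conjE)
    fix u v assume "ad_rank_le_one L1 u" "ad_rank_le_one L1 v" "bracket L1 u v \<noteq> 0"
    moreover have "bracket L2 (A *v u) (A *v v) \<noteq> 0"
      unfolding hom[symmetric] using \<open>bracket L1 u v \<noteq> 0\<close> inj
      by (metis injD matrix_vector_mult_0_right)
    ultimately show "\<exists>u v. ad_rank_le_one L2 u \<and> ad_rank_le_one L2 v \<and> bracket L2 u v \<noteq> 0"
      by (intro exI[of _ "A *v u"] exI[of _ "A *v v"] conjI rank)
  qed
  show "two_independent_rank_le_one_brackets L1 \<Longrightarrow> two_independent_rank_le_one_brackets L2"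
    unfolding two_independent_rank_le_one_brackets_def
  proof (elim bexE)
    fix z1 z2 assume "z1 \<in> rank_le_one_brackets L1" "z2 \<in> rank_le_one_brackets L1"
      "independent_pair z1 z2"
    then show "\<exists>z1\<in>rank_le_one_brackets L2. \<exists>z2\<in>rank_le_one_brackets L2. independent_pair z1 z2"
      by (intro bexI[of _ "A *v z1"] bexI[of _ "A *v z2"] indep brackets)
  qed
  show "three_independent_rank_le_one_brackets L1 \<Longrightarrow> three_independent_rank_le_one_brackets L2"
    unfolding three_independent_rank_le_one_brackets_def
  proof (elim bexE conjE)
    fix z1 z2 z3
    assume "z1 \<in> rank_le_one_brackets L1" "z2 \<in> rank_le_one_brackets L1" "z3 \<in> rank_le_one_brackets L1"
      "independent_pair z1 z2" "independent_pair z1 z3" "independent_pair z2 z3"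
    then show "\<exists>z1\<in>rank_le_one_brackets L2. \<exists>z2\<in>rank_le_one_brackets L2. \<exists>z3\<in>rank_le_one_brackets L2.
        independent_pair z1 z2 \<and> independent_pair z1 z3 \<and> independent_pair z2 z3"
      by (intro bexI[of _ "A *v z1"] bexI[of _ "A *v z2"] bexI[of _ "A *v z3"] conjI indep brackets)
  qed
qed

lemma lie_iso_rank_le_one_signature:
  assumes "lie_iso L1 L2"
  shows "rank_le_one_signature L1 = rank_le_one_signature L2"
proof -
  obtain A B where "is_lie_iso A L1 L2" and "is_lie_iso B L2 L1"
    using assms lie_iso_sym unfolding lie_iso_iff_is_lie_iso by blast
  note to_L2 = is_lie_iso_rank_le_one_properties[OF this(1)]
    and to_L1 = is_lie_iso_rank_le_one_properties[OF this(2)]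
  show ?thesis
    unfolding rank_le_one_signature_def using to_L2 to_L1 by blast
qed

lemma not_two_independent_if_collinear:
  assumes "\<And>z. z \<in> rank_le_one_brackets L \<Longrightarrow> \<exists>c. z = c *s w"
  shows "\<not> two_independent_rank_le_one_brackets L"
  unfolding two_independent_rank_le_one_brackets_def
  using assms not_independent_pair_collinear by blast

lemma not_three_independent_if_on_two_lines:
  assumes "\<And>z. z \<in> rank_le_one_brackets L \<Longrightarrow> (\<exists>c. z = c *s w1) \<or> (\<exists>c. z = c *s w2)"
  shows "\<not> three_independent_rank_le_one_brackets L"
  unfolding three_independent_rank_le_one_brackets_def
proof (intro notI, elim bexE conjE)
  fix z1 z2 z3
  assume z: "z1 \<in> rank_le_one_brackets L" "z2 \<in> rank_le_one_brackets L" "z3 \<in> rank_le_one_brackets L"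
    and "independent_pair z1 z2" "independent_pair z1 z3" "independent_pair z2 z3"
  with assms[OF z(1)] assms[OF z(2)] assms[OF z(3)] show False
    by (elim disjE exE) (simp_all add: not_independent_pair_collinear)
qed

lemma all_basis: "(\<forall>k. P k) \<longleftrightarrow> P X1 \<and> P X2 \<and> P X3 \<and> P X4 \<and> P X5 \<and> P X6 \<and> P Y1 \<and> P Y2"
  by (metis basis.exhaust)

lemma bracket_N1: "bracket N1 u v $ k =
  (if k = Y1 then u$X1 * v$X2 - u$X2 * v$X1 + u$X5 * v$X6 - u$X6 * v$X5
   else if k = Y2 then u$X3 * v$X4 - u$X4 * v$X3 + u$X5 * v$X6 - u$X6 * v$X5 else 0)"
  by (cases k) (simp_all add: bracket_def UNIV_basis br_def N1_def e_def axis_def algebra_simps)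

lemma bracket_N2: "bracket N2 u v $ k =
  (if k = Y1 then u$X5 * v$X2 - u$X2 * v$X5 + u$X6 * v$X1 - u$X1 * v$X6
   else if k = Y2 then u$X5 * v$X3 - u$X3 * v$X5 + u$X6 * v$X4 - u$X4 * v$X6 else 0)"
  by (cases k) (simp_all add: bracket_def UNIV_basis br_def N2_def e_def axis_def algebra_simps)

lemma bracket_N3: "bracket N3 u v $ k =
  (if k = Y1 then u$X1 * v$X2 - u$X2 * v$X1 + u$X6 * v$X5 - u$X5 * v$X6
   else if k = Y2 then u$X3 * v$X6 - u$X6 * v$X3 + u$X5 * v$X4 - u$X4 * v$X5 else 0)"
  by (cases k) (simp_all add: bracket_def UNIV_basis br_def N3_def e_def axis_def algebra_simps)

lemma bracket_N4: "bracket N4 u v $ k =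
  (if k = Y1 then u$X1 * v$X2 - u$X2 * v$X1 + u$X3 * v$X6 - u$X6 * v$X3 + u$X5 * v$X4 - u$X4 * v$X5
   else if k = Y2 then u$X6 * v$X5 - u$X5 * v$X6 else 0)"
  by (cases k) (simp_all add: bracket_def UNIV_basis br_def N4_def e_def axis_def algebra_simps)

lemma bracket_N5: "bracket N5 u v $ k =
  (if k = Y1 then u$X1 * v$X6 - u$X6 * v$X1 + u$X3 * v$X4 - u$X4 * v$X3 + u$X5 * v$X2 - u$X2 * v$X5
   else if k = Y2 then u$X6 * v$X3 - u$X3 * v$X6 + u$X4 * v$X5 - u$X5 * v$X4 else 0)"
  by (cases k) (simp_all add: bracket_def UNIV_basis br_def N5_def e_def axis_def algebra_simps)

lemma ad_rank_le_one_N2D: "ad_rank_le_one N2 u \<Longrightarrow> u$X5 = 0 \<and> u$X6 = 0"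
  using ad_rank_le_one_minor[of N2 u "e X1" Y1 "e X4" Y2]
    ad_rank_le_one_minor[of N2 u "e X2" Y1 "e X3" Y2]
  by (simp add: bracket_N2 e_def axis_def)

lemma ad_rank_le_one_N3D:
  assumes "ad_rank_le_one N3 u"
  shows "u$X5 = 0 \<and> u$X6 = 0 \<and> (u$X1 = 0 \<and> u$X2 = 0 \<or> u$X3 = 0 \<and> u$X4 = 0)"
proof -
  note minor = ad_rank_le_one_minor[OF assms, of _ Y1 _ Y2]
  have "u$X6 = 0" "u$X5 = 0"
    using minor[of "e X3" "e X5"] minor[of "e X4" "e X6"] by (simp_all add: bracket_N3 e_def axis_def)
  moreover from this have "u$X2 * u$X4 = 0" "u$X2 * u$X3 = 0" "u$X1 * u$X4 = 0" "u$X1 * u$X3 = 0"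
    using minor[of "e X1" "e X5"] minor[of "e X1" "e X6"] minor[of "e X2" "e X5"]
      minor[of "e X2" "e X6"]
    by (simp_all add: bracket_N3 e_def axis_def)
  ultimately show ?thesis by auto
qed

lemma ad_rank_le_one_N4D: "ad_rank_le_one N4 u \<Longrightarrow> u$X5 = 0 \<and> u$X6 = 0"
  using ad_rank_le_one_minor[of N4 u "e X3" Y1 "e X5" Y2]
    ad_rank_le_one_minor[of N4 u "e X4" Y1 "e X6" Y2]
  by (simp add: bracket_N4 e_def axis_def)

lemma ad_rank_le_one_N5D:
  assumes "ad_rank_le_one N5 u"
  shows "u$X3 = 0 \<and> u$X4 = 0 \<and> u$X5 = 0 \<and> u$X6 = 0"
proof -
  note minor = ad_rank_le_one_minor[OF assms, of _ Y1 _ Y2]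
  have "u$X6 = 0" "u$X5 = 0"
    using minor[of "e X1" "e X3"] minor[of "e X2" "e X4"] by (simp_all add: bracket_N5 e_def axis_def)
  moreover from this have "u$X4 = 0" "u$X3 = 0"
    using minor[of "e X3" "e X5"] minor[of "e X4" "e X6"] by (simp_all add: bracket_N5 e_def axis_def)
  ultimately show ?thesis by simp
qed

lemma rank_le_one_signature_N1: "rank_le_one_signature N1 = (True, True, True)"
proof -
  have rank: "ad_rank_le_one N1 (e X1)" "ad_rank_le_one N1 (e X2)"
      "ad_rank_le_one N1 (e X3)" "ad_rank_le_one N1 (e X5)"
    by (rule ad_rank_le_one_intro[where c = "\<lambda>v. v$X2" and w = "e Y1"]
        ad_rank_le_one_intro[where c = "\<lambda>v. - v$X1" and w = "e Y1"]
        ad_rank_le_one_intro[where c = "\<lambda>v. v$X4" and w = "e Y2"]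
        ad_rank_le_one_intro[where c = "\<lambda>v. v$X6" and w = "e Y1 + e Y2"];
        simp add: vec_eq_iff all_basis bracket_N1 e_def axis_def)+
  have "rank_le_one_noncommuting N1"
    unfolding rank_le_one_noncommuting_def using rank(1,2)
    by (intro exI[of _ "e X1"] exI[of _ "e X2"] conjI) (auto simp: vec_eq_iff bracket_N1 e_def axis_def)
  moreover have "three_independent_rank_le_one_brackets N1"
    by (rule three_independent_rank_le_one_bracketsI[OF rank(1,3,4), of "e X2" "e X4" "e X6"];
        rule independent_pair_if_minor_nonzero[of _ Y1 _ Y2]; simp add: bracket_N1 e_def axis_def)
  ultimately show ?thesis by (simp add: rank_le_one_signature_def three_independent_imp_two)
qed

lemma rank_le_one_signature_N2: "rank_le_one_signature N2 = (False, True, True)"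
proof -
  have rank: "ad_rank_le_one N2 (e X1)" "ad_rank_le_one N2 (e X3)"
      "ad_rank_le_one N2 (e X1 + e X2 + e X3 + e X4)"
    by (rule ad_rank_le_one_intro[where c = "\<lambda>v. - v$X6" and w = "e Y1"]
        ad_rank_le_one_intro[where c = "\<lambda>v. - v$X5" and w = "e Y2"]
        ad_rank_le_one_intro[where c = "\<lambda>v. - v$X5 - v$X6" and w = "e Y1 + e Y2"];
        simp add: vec_eq_iff all_basis bracket_N2 e_def axis_def)+
  have "\<not> rank_le_one_noncommuting N2"
    unfolding rank_le_one_noncommuting_def
    by (auto simp: vec_eq_iff bracket_N2 dest!: ad_rank_le_one_N2D)
  moreover have "three_independent_rank_le_one_brackets N2"
    by (rule three_independent_rank_le_one_bracketsI[OF rank, of "e X6" "e X5" "e X5"];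
        rule independent_pair_if_minor_nonzero[of _ Y1 _ Y2]; simp add: bracket_N2 e_def axis_def)
  ultimately show ?thesis by (simp add: rank_le_one_signature_def three_independent_imp_two)
qed

lemma rank_le_one_signature_N3: "rank_le_one_signature N3 = (True, True, False)"
proof -
  have rank: "ad_rank_le_one N3 (e X1)" "ad_rank_le_one N3 (e X2)" "ad_rank_le_one N3 (e X3)"
    by (rule ad_rank_le_one_intro[where c = "\<lambda>v. v$X2" and w = "e Y1"]
        ad_rank_le_one_intro[where c = "\<lambda>v. - v$X1" and w = "e Y1"]
        ad_rank_le_one_intro[where c = "\<lambda>v. v$X6" and w = "e Y2"];
        simp add: vec_eq_iff all_basis bracket_N3 e_def axis_def)+
  have "rank_le_one_noncommuting N3"
    unfolding rank_le_one_noncommuting_def using rank(1,2)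
    by (intro exI[of _ "e X1"] exI[of _ "e X2"] conjI) (auto simp: vec_eq_iff bracket_N3 e_def axis_def)
  moreover have "two_independent_rank_le_one_brackets N3"
    by (rule two_independent_rank_le_one_bracketsI[OF rank(1,3), of "e X2" "e X6"],
        rule independent_pair_if_minor_nonzero[of _ Y1 _ Y2], simp add: bracket_N3 e_def axis_def)
  moreover have "\<not> three_independent_rank_le_one_brackets N3"
  proof (rule not_three_independent_if_on_two_lines[of _ "e Y1" "e Y2"])
    fix z assume "z \<in> rank_le_one_brackets N3"
    then obtain u v where "ad_rank_le_one N3 u" and "z = bracket N3 u v"
      unfolding rank_le_one_brackets_def by blast
    then have "z = z$Y1 *s e Y1 \<or> z = z$Y2 *s e Y2"
      by (auto simp: vec_eq_iff all_basis bracket_N3 e_def axis_def dest!: ad_rank_le_one_N3D)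
    then show "(\<exists>c. z = c *s e Y1) \<or> (\<exists>c. z = c *s e Y2)" by blast
  qed
  ultimately show ?thesis by (simp add: rank_le_one_signature_def)
qed

lemma rank_le_one_signature_N4: "rank_le_one_signature N4 = (True, False, False)"
proof -
  have rank: "ad_rank_le_one N4 (e X1)" "ad_rank_le_one N4 (e X2)"
    by (rule ad_rank_le_one_intro[where c = "\<lambda>v. v$X2" and w = "e Y1"]
        ad_rank_le_one_intro[where c = "\<lambda>v. - v$X1" and w = "e Y1"];
        simp add: vec_eq_iff all_basis bracket_N4 e_def axis_def)+
  have "rank_le_one_noncommuting N4"
    unfolding rank_le_one_noncommuting_def using rank
    by (intro exI[of _ "e X1"] exI[of _ "e X2"] conjI) (auto simp: vec_eq_iff bracket_N4 e_def axis_def)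
  moreover have "\<not> two_independent_rank_le_one_brackets N4"
  proof (rule not_two_independent_if_collinear[of _ "e Y1"])
    fix z assume "z \<in> rank_le_one_brackets N4"
    then have "z = z$Y1 *s e Y1"
      unfolding rank_le_one_brackets_def
      by (auto simp: vec_eq_iff all_basis bracket_N4 e_def axis_def dest!: ad_rank_le_one_N4D)
    then show "\<exists>c. z = c *s e Y1" by blast
  qed
  ultimately show ?thesis by (auto simp: rank_le_one_signature_def dest: three_independent_imp_two)
qed

lemma rank_le_one_signature_N5: "rank_le_one_signature N5 = (False, False, False)"
proof -
  have "\<not> rank_le_one_noncommuting N5"
    unfolding rank_le_one_noncommuting_def
    by (auto simp: vec_eq_iff bracket_N5 dest!: ad_rank_le_one_N5D)
  moreover have "\<not> two_independent_rank_le_one_brackets N5"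
  proof (rule not_two_independent_if_collinear[of _ "e Y1"])
    fix z assume "z \<in> rank_le_one_brackets N5"
    then have "z = z$Y1 *s e Y1"
      unfolding rank_le_one_brackets_def
      by (auto simp: vec_eq_iff all_basis bracket_N5 e_def axis_def dest!: ad_rank_le_one_N5D)
    then show "\<exists>c. z = c *s e Y1" by blast
  qed
  ultimately show ?thesis by (auto simp: rank_le_one_signature_def dest: three_independent_imp_two)
qed

lemma rank_le_one_signature_N_distinct:
  assumes "i \<in> {1..5}" "j \<in> {1..5}" "i \<noteq> j"
  shows "rank_le_one_signature (N i) \<noteq> rank_le_one_signature (N j)"
proof -
  have "distinct (map (\<lambda>i. rank_le_one_signature (N i)) [1..<6])"
    by (simp add: upt_rec N_def rank_le_one_signature_N1 rank_le_one_signature_N2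
        rank_le_one_signature_N3 rank_le_one_signature_N4 rank_le_one_signature_N5)
  moreover have "{1..5} = set [1..<6]" by auto
  ultimately have "inj_on (\<lambda>i. rank_le_one_signature (N i)) {1..5}"
    by (simp add: distinct_map)
  with assms show ?thesis by (auto dest: inj_onD)
qed

theorem theorem2:
  shows "\<forall>i\<in>{1..5::nat}. \<forall>j\<in>{1..5::nat}. i \<noteq> j \<longrightarrow> \<not> lie_iso (N i) (N j)"
  using rank_le_one_signature_N_distinct lie_iso_rank_le_one_signature by blast

end
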